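(* Let $V$ be a finite set, $f:2^V\to\mathbb{R}$ non-decreasing and submodular, $k\ge1$ an integer, $\mathrm{OPT}\subseteq V$ with $|\mathrm{OPT}|=k$ maximizing $f$ among $k$-element subsets of $V$, $A\subseteq V$ with $|A|=k$, and $A'\subseteq A$ with $|A'|<k$. Let $B'\subseteq V\setminus A'$ be the greedy set: starting from $B'=\emptyset$, while $|B'|<k-|A'|$, add an element $e\in V\setminus(A'\cup B')$ maximizing $f(A'\cup B'\cup\{e\})-f(A'\cup B')$. Then \[ f(B'\cup A')\ \ge\ f(A')+\frac{1-\frac1e}{\left\lceil\frac{|\mathrm{OPT}\setminus A'|}{k-|A'|}\right\rceil}\bigl(f(\mathrm{OPT}\cup A')-f(A')\bigr). \]
   Context: $f$ non-decreasing means $f(X)\le f(Y)$ for $X\subseteq Y$; submodular means $f(X\cup\{e\})-f(X)\ge f(Y\cup\{e\})-f(Y)$ for $X\subseteq Y\subseteq V$, $e\notin Y$. *)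

theory Defs
  imports "HOL-Analysis.Analysis"
begin

definition nondecreasing_on :: "'a set \<Rightarrow> ('a set \<Rightarrow> real) \<Rightarrow> bool" where
  "nondecreasing_on V f \<longleftrightarrow> (\<forall>X Y. X \<subseteq> Y \<and> Y \<subseteq> V \<longrightarrow> f X \<le> f Y)"

definition submodular_on :: "'a set \<Rightarrow> ('a set \<Rightarrow> real) \<Rightarrow> bool" where
  "submodular_on V f \<longleftrightarrow>
     (\<forall>X Y e. X \<subseteq> Y \<and> Y \<subseteq> V \<and> e \<in> V \<and> e \<notin> Y \<longrightarrow>
        f (X \<union> {e}) - f X \<ge> f (Y \<union> {e}) - f Y)"

text \<open>A run of the greedy algorithm started on top of a fixed set S: the list es records
  the chosen elements in order; the i-th element is taken from V minus (S and the
  previously chosen elements) and maximizes the marginal gain f(S \<union> B \<union> {e}) - f(S \<union> B),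
  where B is the set of previously chosen elements (ties broken arbitrarily).\<close>
definition greedy_run :: "'a set \<Rightarrow> ('a set \<Rightarrow> real) \<Rightarrow> 'a set \<Rightarrow> 'a list \<Rightarrow> bool" where
  "greedy_run V f S es \<longleftrightarrow>
     (\<forall>i < length es.
        es ! i \<in> V - (S \<union> set (take i es)) \<and>
        (\<forall>x \<in> V - (S \<union> set (take i es)).
            f (S \<union> set (take i es) \<union> {x}) - f (S \<union> set (take i es))
            \<le> f (S \<union> set (take i es) \<union> {es ! i}) - f (S \<union> set (take i es))))"

end

theory Submission
  imports Defs
begin

text \<open>Let \<open>p = |OPT - A'|\<close> and \<open>m = k - |A'|\<close>. By submodularity, adding the at most \<open>p\<close> elements
  of \<open>OPT - A'\<close> one by one to the current greedy set gains at most \<open>p\<close> times the best single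
  gain, so each greedy step closes at least a \<open>1/p\<close> fraction of the remaining gap to
  \<open>f (OPT \<union> A')\<close>. After \<open>m\<close> steps the gap has shrunk by the factor \<open>(1 - 1/p)^m \<le> exp (-m/p)\<close>,
  and \<open>1 - exp (-m/p) \<ge> (1 - 1/e) / \<lceil>p/m\<rceil>\<close> by concavity of \<open>1 - exp (-x)\<close>.\<close>

lemma submodular_on_gain_le_sum_gains:
  assumes "submodular_on V f" and "finite T" and "S \<union> T \<subseteq> V"
  shows "f (S \<union> T) - f S \<le> (\<Sum>t\<in>T - S. f (S \<union> {t}) - f S)"
  using assms(2,3)
proof (induction T rule: finite_induct)
  case empty
  then show ?case by simp
next
  case (insert x T)
  have IH: "f (S \<union> T) - f S \<le> (\<Sum>t\<in>T - S. f (S \<union> {t}) - f S)"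
    using insert by auto
  show ?case
  proof (cases "x \<in> S")
    case True
    then have "S \<union> insert x T = S \<union> T" "insert x T - S = T - S" by auto
    then show ?thesis using IH by simp
  next
    case False
    have "S \<subseteq> S \<union> T" "S \<union> T \<subseteq> V" "x \<in> V" "x \<notin> S \<union> T"
      using insert.prems insert.hyps False by auto
    then have "f (S \<union> T \<union> {x}) - f (S \<union> T) \<le> f (S \<union> {x}) - f S"
      using assms(1) unfolding submodular_on_def by blast
    moreover have "S \<union> insert x T = S \<union> T \<union> {x}" "insert x T - S = insert x (T - S)"
      using False by auto
    ultimately show ?thesis using IH insert.hyps by simp
  qed
qed

lemma nondecreasing_onD:
  assumes "nondecreasing_on V f" and "X \<subseteq> Y" and "Y \<subseteq> V"
  shows "f X \<le> f Y"
  using assms unfolding nondecreasing_on_def by blast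

lemma greedy_run_nthD:
  assumes "greedy_run V f S es" and "i < length es"
  shows "es ! i \<in> V - (S \<union> set (take i es))"
    and "\<And>x. x \<in> V - (S \<union> set (take i es)) \<Longrightarrow>
           f (S \<union> set (take i es) \<union> {x}) - f (S \<union> set (take i es))
           \<le> f (S \<union> set (take i es) \<union> {es ! i}) - f (S \<union> set (take i es))"
  using assms unfolding greedy_run_def by blast+

lemma greedy_run_set_subset:
  assumes "greedy_run V f S es"
  shows "set es \<subseteq> V"
  using greedy_run_nthD(1)[OF assms] by (auto simp: in_set_conv_nth)

lemma greedy_run_gap_le_card_mult_gain:
  assumes mono: "nondecreasing_on V f" and submod: "submodular_on V f"
    and S_V: "S \<subseteq> V" and fin_T: "finite T" and T_V: "T \<subseteq> V"
    and greedy: "greedy_run V f S es" and i_less: "i < length es"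
  shows "f (S \<union> T) - f (S \<union> set (take i es))
         \<le> real (card T) * (f (S \<union> set (take (Suc i) es)) - f (S \<union> set (take i es)))"
proof -
  define B where "B = S \<union> set (take i es)"
  define g where "g = f (B \<union> {es ! i}) - f B"
  have B_V: "B \<subseteq> V"
    using S_V greedy_run_set_subset[OF greedy] set_take_subset[of i es]
    unfolding B_def by blast
  have next_eq: "S \<union> set (take (Suc i) es) = B \<union> {es ! i}"
    using i_less unfolding B_def by (simp add: take_Suc_conv_app_nth Un_assoc)
  have "f (S \<union> T) \<le> f (B \<union> T)"
    by (rule nondecreasing_onD[OF mono]) (use B_V T_V in \<open>auto simp: B_def\<close>)
  moreover have "f (B \<union> T) - f B \<le> (\<Sum>t\<in>T - B. f (B \<union> {t}) - f B)"
    using submodular_on_gain_le_sum_gains[OF submod fin_T, of B] B_V T_V by simp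
  moreover have "\<dots> \<le> (\<Sum>t\<in>T - B. g)"
  proof (rule sum_mono)
    fix t assume "t \<in> T - B"
    then have "t \<in> V - (S \<union> set (take i es))" using T_V unfolding B_def by blast
    from greedy_run_nthD(2)[OF greedy i_less this] show "f (B \<union> {t}) - f B \<le> g"
      unfolding g_def B_def .
  qed
  moreover have "\<dots> \<le> real (card T) * g"
  proof -
    have "B \<union> {es ! i} \<subseteq> V"
      using B_V greedy_run_nthD(1)[OF greedy i_less] by blast
    then have "f B \<le> f (B \<union> {es ! i})"
      by (intro nondecreasing_onD[OF mono]) auto
    then have "0 \<le> g" unfolding g_def by simp
    moreover have "card (T - B) \<le> card T" using fin_T by (rule card_mono) blast
    ultimately show ?thesis by (simp add: mult_right_mono)
  qed
  ultimately show ?thesis unfolding next_eq g_def B_def by linarith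
qed

lemma greedy_run_gap_decay:
  assumes mono: "nondecreasing_on V f" and submod: "submodular_on V f"
    and S_V: "S \<subseteq> V" and fin_T: "finite T" and T_V: "T \<subseteq> V"
    and greedy: "greedy_run V f S es" and i_le: "i \<le> length es"
  shows "f (S \<union> T) - f (S \<union> set (take i es)) \<le> (1 - 1 / real (card T)) ^ i * (f (S \<union> T) - f S)"
  using i_le
proof (induction i)
  case 0
  then show ?case by simp
next
  case (Suc i)
  define D where "D = f (S \<union> T) - f (S \<union> set (take i es))"
  define g where "g = f (S \<union> set (take (Suc i) es)) - f (S \<union> set (take i es))"
  have gain: "D \<le> real (card T) * g"
    using greedy_run_gap_le_card_mult_gain[OF mono submod S_V fin_T T_V greedy] Suc.prems
    unfolding D_def g_def by simp
  \<comment> \<open>for \<open>T = {}\<close> the division is by zero and monotonicity alone gives \<open>g \<ge> 0\<close>\<close>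
  have "D / real (card T) \<le> g"
  proof (cases "card T = 0")
    case True
    have "S \<union> set (take (Suc i) es) \<subseteq> V"
      using S_V greedy_run_set_subset[OF greedy] set_take_subset[of "Suc i" es] by blast
    moreover have "S \<union> set (take i es) \<subseteq> S \<union> set (take (Suc i) es)"
      using set_take_subset_set_take[of i "Suc i" es] by auto
    ultimately have "0 \<le> g"
      using nondecreasing_onD[OF mono] unfolding g_def by simp
    then show ?thesis using True by simp
  next
    case False
    then show ?thesis using gain by (simp add: divide_le_eq mult.commute)
  qed
  then have "f (S \<union> T) - f (S \<union> set (take (Suc i) es)) \<le> D - D / real (card T)"
    unfolding D_def g_def by simp
  also have "\<dots> = (1 - 1 / real (card T)) * D" by (simp add: algebra_simps)
  also have "\<dots> \<le> (1 - 1 / real (card T)) * ((1 - 1 / real (card T)) ^ i * (f (S \<union> T) - f S))"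
    using Suc unfolding D_def by (intro mult_left_mono) (auto simp: divide_le_eq_1)
  finally show ?case by simp
qed

lemma greedy_run_approximation:
  assumes "nondecreasing_on V f" "submodular_on V f"
    and "S \<subseteq> V" "finite T" "T \<subseteq> V" "greedy_run V f S es"
  shows "f (S \<union> set es) - f S \<ge> (1 - (1 - 1 / real (card T)) ^ length es) * (f (S \<union> T) - f S)"
  using greedy_run_gap_decay[OF assms, of "length es"] by (simp add: algebra_simps)

lemma one_minus_exp_neg_ge:
  fixes x :: real
  assumes "0 \<le> x"
  shows "(1 - 1 / exp 1) * min 1 x \<le> 1 - exp (- x)"
proof (cases "x \<le> 1")
  case True
  have "exp ((1 - x) *\<^sub>R 0 + x *\<^sub>R (-1)) \<le> (1 - x) * exp 0 + x * exp (-1)"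
    using convex_onD[OF exp_convex, of x 0 "-1"] assms True by simp
  then show ?thesis using True by (simp add: exp_minus inverse_eq_divide algebra_simps)
next
  case False
  then show ?thesis by (simp add: exp_minus inverse_eq_divide frac_le)
qed

lemma one_minus_inv_e_div_ceiling_le:
  fixes p m :: nat
  assumes "m \<ge> 1"
  shows "(1 - 1 / exp 1) / real_of_int \<lceil>real p / real m\<rceil> \<le> 1 - (1 - 1 / real p) ^ m"
proof (cases "p = 0")
  case True
  then show ?thesis by simp
next
  case False
  define x where "x = real m / real p"
  define c where "c = real_of_int \<lceil>real p / real m\<rceil>"
  have "0 < x" using assms False unfolding x_def by simp
  have "1 \<le> c" using assms False unfolding c_def by (simp add: one_le_ceiling)
  have "1 / c \<le> x"
  proof -
    have "real p / real m \<le> c" unfolding c_def by linarith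
    then show ?thesis using assms False \<open>1 \<le> c\<close> unfolding x_def by (simp add: field_simps)
  qed
  then have "1 / c \<le> min 1 x" using \<open>1 \<le> c\<close> by simp
  then have "(1 - 1 / exp 1) * (1 / c) \<le> (1 - 1 / exp 1) * min 1 x"
    using exp_gt_one[of 1] by (intro mult_left_mono) auto
  have "(1 - 1 / real p) ^ m \<le> exp (- (1 / real p)) ^ m"
    using False exp_ge_add_one_self[of "- (1 / real p)"] by (intro power_mono) auto
  also have "\<dots> = exp (- x)"
    unfolding x_def by (simp add: exp_of_nat_mult[symmetric])
  finally have power_le_exp: "(1 - 1 / real p) ^ m \<le> exp (- x)" .
  have "(1 - 1 / exp 1) / c \<le> (1 - 1 / exp 1) * min 1 x"
    using \<open>(1 - 1 / exp 1) * (1 / c) \<le> (1 - 1 / exp 1) * min 1 x\<close> by simp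
  also have "\<dots> \<le> 1 - exp (- x)" using \<open>0 < x\<close> by (intro one_minus_exp_neg_ge) simp
  also have "\<dots> \<le> 1 - (1 - 1 / real p) ^ m" using power_le_exp by simp
  finally show ?thesis unfolding c_def .
qed

theorem mainTheorem3:
  fixes V :: "'a set" and f :: "'a set \<Rightarrow> real" and k :: nat
    and OPT A A' :: "'a set" and es :: "'a list"
  assumes "finite V"
    and "nondecreasing_on V f" and "submodular_on V f"
    and "k \<ge> 1"
    and "OPT \<subseteq> V" and "card OPT = k"
    and "\<forall>S. S \<subseteq> V \<and> card S = k \<longrightarrow> f S \<le> f OPT"
    and "A \<subseteq> V" and "card A = k"
    and "A' \<subseteq> A" and "card A' < k"
    and "greedy_run V f A' es" and "length es = k - card A'"
  shows "f (set es \<union> A') \<ge> f A' +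
           (1 - 1 / exp 1) / real_of_int \<lceil>real (card (OPT - A')) / real (k - card A')\<rceil>
             * (f (OPT \<union> A') - f A')"
proof -
  let ?p = "card (OPT - A')" and ?m = "k - card A'"
  have A'_V: "A' \<subseteq> V" using assms(8,10) by blast
  have union_eq: "A' \<union> (OPT - A') = OPT \<union> A'" "A' \<union> set es = set es \<union> A'" by auto
  have "f A' \<le> f (OPT \<union> A')"
    using nondecreasing_onD[OF assms(2)] assms(5) A'_V by simp
  then have "(1 - 1 / exp 1) / real_of_int \<lceil>real ?p / real ?m\<rceil> * (f (OPT \<union> A') - f A')
             \<le> (1 - (1 - 1 / real ?p) ^ ?m) * (f (OPT \<union> A') - f A')"
    using one_minus_inv_e_div_ceiling_le[of ?m ?p] assms(11) by (intro mult_right_mono) auto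
  also have "\<dots> \<le> f (set es \<union> A') - f A'"
    using greedy_run_approximation[OF assms(2,3) A'_V finite_subset[OF _ assms(1)] _ assms(12),
          of "OPT - A'"] assms(5)
    unfolding union_eq assms(13) by blast
  finally show ?thesis by simp
qed

end
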